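(* Let $\mathcal{T}$ be a finite tree, $w:V(\mathcal{T})\to\mathbb{R}_{\ge0}$, and $m=w(\mathcal{T})$. Then (i) for every $\alpha\in(0,1)$: $\displaystyle \mathtt{cent}^\alpha(\mathcal{T},w)\le\frac{1}{1-\alpha}\mathtt{OPT}(\mathcal{T},w)-\frac{\alpha}{1-\alpha}m$; (ii) for every $\alpha\in[\tfrac13,\tfrac12]$: $\displaystyle \mathtt{cent}^\alpha(\mathcal{T},w)\le\frac{1}{2-3\alpha}\mathtt{OPT}(\mathcal{T},w)-\frac{3\alpha-1}{2-3\alpha}m$.
   Context: For a subgraph $\mathcal{H}$ of $\mathcal{T}$, $w(\mathcal{H})=\sum_{x\in V(\mathcal{H})}w(x)$. A search tree on a tree $\mathcal{T}$ is a rooted tree $T$ with vertex set $V(\mathcal{T})$ defined recursively: its root is an arbitrary vertex $r$, and the children of $r$ are the roots of search trees built on the connected components of $\mathcal{T}-r$; a single-vertex tree has only itself as search tree. $\mathtt{cost}_w(T)=\sum_x w(x)\,\mathtt{depth}_T(x)$ with root depth $1$; $\mathtt{OPT}(\mathcal{T},w)$ is the minimum cost over all search trees on $\mathcal{T}$. For $0\le\alpha\le1$, a vertex $v$ is an $\alpha$-centroid of $(\mathcal{T},w)$ if every component $\mathcal{H}$ of $\mathcal{T}-v$ has $w(\mathcal{H})\le\alpha\, w(\mathcal{T})$. A search tree $T$ is an $\alpha$-centroid tree if every vertex $x$ is an $\alpha$-centroid of $(\mathcal{T}[V(T_x)],w)$, where $T_x$ is the subtree of $T$ rooted at $x$. $\mathtt{cent}^\alpha(\mathcal{T},w)$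 is the maximum cost of an $\alpha$-centroid tree of $(\mathcal{T},w)$, or $0$ if none exists. *)

theory Defs
  imports Main "HOL.Real"
begin

definition restr_rel :: "('a \<times> 'a) set \<Rightarrow> 'a set \<Rightarrow> 'a \<Rightarrow> 'a \<Rightarrow> bool" where
  "restr_rel E S x y \<longleftrightarrow> (x, y) \<in> E \<and> x \<in> S \<and> y \<in> S"

definition uedges :: "('a \<times> 'a) set \<Rightarrow> 'a set set" where
  "uedges E = {{x, y} | x y. (x, y) \<in> E}"

definition is_tree :: "'a set \<Rightarrow> ('a \<times> 'a) set \<Rightarrow> bool" where
  "is_tree V E \<longleftrightarrow> finite V \<and> V \<noteq> {} \<and> E \<subseteq> V \<times> V \<and> sym E \<and> (\<forall>x. (x, x) \<notin> E)
     \<and> (\<forall>x\<in>V. \<forall>y\<in>V. (restr_rel E V)\<^sup>*\<^sup>* x y)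
     \<and> card (uedges E) = card V - 1"

definition component :: "('a \<times> 'a) set \<Rightarrow> 'a set \<Rightarrow> 'a \<Rightarrow> 'a set" where
  "component E S x = {y. x \<in> S \<and> (restr_rel E S)\<^sup>*\<^sup>* x y}"

definition components :: "('a \<times> 'a) set \<Rightarrow> 'a set \<Rightarrow> 'a set set" where
  "components E S = component E S ` S"

datatype 'a stree = Node 'a "'a stree list"

fun root :: "'a stree \<Rightarrow> 'a" where
  "root (Node r ts) = r"

fun vset :: "'a stree \<Rightarrow> 'a set" where
  "vset (Node r ts) = insert r (\<Union>t\<in>set ts. vset t)"

fun subtrees :: "'a stree \<Rightarrow> 'a stree set" where
  "subtrees (Node r ts) = insert (Node r ts) (\<Union>t\<in>set ts. subtrees t)"

inductive search_tree :: "('a \<times> 'a) set \<Rightarrow> 'a set \<Rightarrow> 'a stree \<Rightarrow> bool" for E where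
  "\<lbrakk> r \<in> S; distinct (map vset ts); set (map vset ts) = components E (S - {r});
     \<forall>t\<in>set ts. search_tree E (vset t) t \<rbrakk> \<Longrightarrow> search_tree E S (Node r ts)"

text \<open>cost_w(T) = sum of w(x) * depth(x), root depth 1.\<close>
fun cost_aux :: "('a \<Rightarrow> real) \<Rightarrow> nat \<Rightarrow> 'a stree \<Rightarrow> real" where
  "cost_aux w d (Node r ts) = real d * w r + sum_list (map (cost_aux w (Suc d)) ts)"

definition cost :: "('a \<Rightarrow> real) \<Rightarrow> 'a stree \<Rightarrow> real" where
  "cost w T = cost_aux w 1 T"

definition OPT :: "'a set \<Rightarrow> ('a \<times> 'a) set \<Rightarrow> ('a \<Rightarrow> real) \<Rightarrow> real" where
  "OPT V E w = Min {cost w T | T. search_tree E V T}"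

definition is_centroid :: "('a \<times> 'a) set \<Rightarrow> ('a \<Rightarrow> real) \<Rightarrow> real \<Rightarrow> 'a set \<Rightarrow> 'a \<Rightarrow> bool" where
  "is_centroid E w \<alpha> S v \<longleftrightarrow> v \<in> S \<and>
     (\<forall>H\<in>components E (S - {v}). sum w H \<le> \<alpha> * sum w S)"

definition centroid_tree :: "'a set \<Rightarrow> ('a \<times> 'a) set \<Rightarrow> ('a \<Rightarrow> real) \<Rightarrow> real \<Rightarrow> 'a stree \<Rightarrow> bool" where
  "centroid_tree V E w \<alpha> T \<longleftrightarrow> search_tree E V T \<and>
     (\<forall>s\<in>subtrees T. is_centroid E w \<alpha> (vset s) (root s))"

definition cent :: "real \<Rightarrow> 'a set \<Rightarrow> ('a \<times> 'a) set \<Rightarrow> ('a \<Rightarrow> real) \<Rightarrow> real" where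
  "cent \<alpha> V E w = (if \<exists>T. centroid_tree V E w \<alpha> T
      then Max {cost w T | T. centroid_tree V E w \<alpha> T} else 0)"

end

theory Submission
  imports Defs
begin

(* Let T be an \<alpha>-centroid tree, r the root of a subtree on a connected set S, and
  H ranging over the components of S - {r}. The cost of T satisfies
  cost(S) = w(S) + \<Sum>H cost(H), so it suffices to show that the gain
  Y = OPT(S) - \<Sum>H OPT(H) is at least c w(S) + \<beta> w(r); the bound then telescopes to
  c cost(T) \<le> OPT(V) - \<beta> w(V). To bound Y, take an optimal tree of S with root s and
  charge its cost against the trees it induces on the components H. If s = r, then Y \<ge> w(S).
  Otherwise s lies in some component Hj and the child of s containing r spans everything
  outside Hj; repeating the argument one level down gives Y \<ge> w(S) - w(Hj) + w(r) and
  Y \<ge> 2 (w(S) - w(Hj)) or Y \<ge> 2 (w(S) - w(Hj)) - w(Hi) + w(r). Since components weigh at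
  most \<alpha> w(S), this yields (c, \<beta>) = (1 - \<alpha>, \<alpha>), and (2 - 3\<alpha>, 3\<alpha> - 1) for 1/3 \<le> \<alpha> \<le> 1/2. *)

section \<open>Connected components\<close>

definition connected_on :: "('a \<times> 'a) set \<Rightarrow> 'a set \<Rightarrow> bool" where
  "connected_on E S \<longleftrightarrow> (\<forall>x\<in>S. component E S x = S)"

lemma restr_rel_rtranclp_sym:
  assumes "sym E" "(restr_rel E S)\<^sup>*\<^sup>* x y"
  shows "(restr_rel E S)\<^sup>*\<^sup>* y x"
proof -
  have "symp (restr_rel E S)"
    using assms(1) by (auto simp: symp_def restr_rel_def dest: symD)
  then show ?thesis
    using assms(2) by (rule symp_rtranclp[THEN sympD])
qed

lemma restr_rel_rtranclp_in: "(restr_rel E S)\<^sup>*\<^sup>* x y \<Longrightarrow> x \<in> S \<Longrightarrow> y \<in> S"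
  by (induction rule: rtranclp_induct) (auto simp: restr_rel_def)

lemma restr_rel_rtranclp_mono:
  assumes "K \<subseteq> H"
  shows "(restr_rel E K)\<^sup>*\<^sup>* x y \<Longrightarrow> (restr_rel E H)\<^sup>*\<^sup>* x y"
proof (induction rule: rtranclp_induct)
  case (step y z)
  then have "restr_rel E H y z" using assms by (auto simp: restr_rel_def)
  with step.IH show ?case by (rule rtranclp.rtrancl_into_rtrancl)
qed simp

lemma in_component_self: "x \<in> S \<Longrightarrow> x \<in> component E S x"
  by (simp add: component_def)

lemma component_subset: "component E S x \<subseteq> S"
  using restr_rel_rtranclp_in by (fastforce simp: component_def)

lemma component_mono: "K \<subseteq> H \<Longrightarrow> component E K x \<subseteq> component E H x"
  by (auto simp: component_def intro: restr_rel_rtranclp_mono)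

lemma component_eq:
  assumes "sym E" "y \<in> component E S x"
  shows "component E S y = component E S x"
proof -
  have x: "x \<in> S" and xy: "(restr_rel E S)\<^sup>*\<^sup>* x y"
    using assms(2) by (auto simp: component_def)
  have "y \<in> S" using restr_rel_rtranclp_in[OF xy x] .
  moreover have "(restr_rel E S)\<^sup>*\<^sup>* y x" using restr_rel_rtranclp_sym[OF assms(1) xy] .
  ultimately show ?thesis
    using x xy unfolding component_def by (blast intro: rtranclp_trans)
qed

lemma component_restrict:
  assumes "x \<in> K" "K \<subseteq> H" "component E H x \<subseteq> K"
  shows "component E K x = component E H x"
proof
  show "component E K x \<subseteq> component E H x" using component_mono[OF assms(2)] .
  have "(restr_rel E K)\<^sup>*\<^sup>* x y" if "(restr_rel E H)\<^sup>*\<^sup>* x y" for y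
    using that
  proof (induction rule: rtranclp_induct)
    case (step y z)
    then have "y \<in> component E H x" "z \<in> component E H x"
      using assms(1,2) unfolding component_def by (auto intro: rtranclp.rtrancl_into_rtrancl)
    then have "restr_rel E K y z"
      using step(2) assms(3) by (auto simp: restr_rel_def)
    with step.IH show ?case by (rule rtranclp.rtrancl_into_rtrancl)
  qed simp
  then show "component E H x \<subseteq> component E K x"
    using assms(1) by (auto simp: component_def)
qed

lemma component_in_components: "x \<in> S \<Longrightarrow> component E S x \<in> components E S"
  by (simp add: components_def)

lemma components_subset: "C \<in> components E S \<Longrightarrow> C \<subseteq> S"
  unfolding components_def by (elim imageE) (simp add: component_subset)

lemma components_nonempty: "C \<in> components E S \<Longrightarrow> C \<noteq> {}"
  unfolding components_def by (elim imageE) (auto dest: in_component_self)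

lemma Union_components: "\<Union>(components E S) = S"
proof
  show "\<Union>(components E S) \<subseteq> S" using components_subset by (rule Sup_least)
  show "S \<subseteq> \<Union>(components E S)"
    using in_component_self component_in_components by fast
qed

lemma finite_components: "finite S \<Longrightarrow> finite (components E S)"
  by (simp add: components_def)

lemma components_eq_component:
  assumes "sym E" "C \<in> components E S" "x \<in> C"
  shows "C = component E S x"
proof -
  obtain a where "C = component E S a" using assms(2) unfolding components_def by blast
  with component_eq[OF assms(1)] assms(3) show ?thesis by metis
qed

lemma components_disjoint:
  "sym E \<Longrightarrow> C \<in> components E S \<Longrightarrow> D \<in> components E S \<Longrightarrow> C \<noteq> D \<Longrightarrow> C \<inter> D = {}"
  by (metis components_eq_component disjoint_iff)

lemma connected_on_components:
  assumes "sym E" "C \<in> components E S"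
  shows "connected_on E C"
  unfolding connected_on_def
proof
  fix y assume y: "y \<in> C"
  have C: "C = component E S y" using components_eq_component[OF assms y] .
  have "component E C y = component E S y"
    by (rule component_restrict[OF y components_subset[OF assms(2)]]) (simp add: C[symmetric])
  with C show "component E C y = C" by simp
qed

lemma components_connected_on: "connected_on E S \<Longrightarrow> S \<noteq> {} \<Longrightarrow> components E S = {S}"
  unfolding connected_on_def components_def by auto

lemma connected_on_rtranclp:
  "connected_on E S \<Longrightarrow> x \<in> S \<Longrightarrow> y \<in> S \<Longrightarrow> (restr_rel E S)\<^sup>*\<^sup>* x y"
  unfolding connected_on_def component_def by blast


lemma component_Diff_singleton_inside:
  assumes "sym E" "x \<in> H - {r}" "x \<in> component E H r"
  shows "component E (component E H r - {r}) x = component E (H - {r}) x"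
proof (rule component_restrict)
  show "x \<in> component E H r - {r}" using assms(2,3) by simp
  show "component E H r - {r} \<subseteq> H - {r}" using component_subset[of E H r] by blast
  have "component E (H - {r}) x \<subseteq> component E H x" by (rule component_mono) blast
  also have "\<dots> = component E H r" using component_eq[OF assms(1,3)] .
  finally show "component E (H - {r}) x \<subseteq> component E H r - {r}"
    using component_subset[of E "H - {r}" x] by blast
qed

lemma component_Diff_singleton_outside:
  assumes "sym E" "x \<in> H - {r}" "x \<notin> component E H r"
  shows "component E (H - {r}) x = component E H x"
proof (rule component_restrict)
  show "x \<in> H - {r}" "H - {r} \<subseteq> H" using assms(2) by auto
  have "r \<notin> component E H x"
    using component_eq[OF assms(1)] in_component_self assms(2,3) by (metis DiffD1)
  then show "component E H x \<subseteq> H - {r}" using component_subset[of E H x] by blast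
qed

lemma components_Diff_singleton:
  assumes "sym E" "r \<in> H"
  shows "components E (H - {r}) =
    components E (component E H r - {r}) \<union> (components E H - {component E H r})"
    (is "_ = components E (?C - {r}) \<union> _")
proof (intro equalityI subsetI)
  fix D assume "D \<in> components E (H - {r})"
  then obtain x where x: "x \<in> H - {r}" "D = component E (H - {r}) x"
    unfolding components_def by blast
  show "D \<in> components E (?C - {r}) \<union> (components E H - {?C})"
  proof (cases "x \<in> ?C")
    case True
    then have "D = component E (?C - {r}) x" "x \<in> ?C - {r}"
      using component_Diff_singleton_inside[OF assms(1) x(1)] x by auto
    then show ?thesis using component_in_components[of x "?C - {r}" E] by simp
  next
    case False
    then have D: "D = component E H x"
      using component_Diff_singleton_outside[OF assms(1) x(1)] x(2) by simp
    moreover have "x \<in> D" using D in_component_self[of x H E] x(1) by simp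
    ultimately have "D = component E H x" "D \<noteq> ?C" using False by auto
    then show ?thesis using component_in_components[of x H E] x(1) by simp
  qed
next
  fix D assume D: "D \<in> components E (?C - {r}) \<union> (components E H - {?C})"
  show "D \<in> components E (H - {r})"
  proof (cases "D \<in> components E (?C - {r})")
    case True
    then obtain x where x: "x \<in> ?C - {r}" "D = component E (?C - {r}) x"
      unfolding components_def by blast
    then have "x \<in> H - {r}" using component_subset[of E H r] by blast
    with x have "D = component E (H - {r}) x"
      using component_Diff_singleton_inside[OF assms(1)] by blast
    then show ?thesis using component_in_components[OF \<open>x \<in> H - {r}\<close>] by simp
  next
    case False
    with D obtain x where x: "x \<in> H" "D = component E H x" "D \<noteq> ?C"
      unfolding components_def by blast
    then have "x \<notin> ?C" using component_eq[OF assms(1)] by metis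
    moreover have "x \<noteq> r" using assms(2) \<open>x \<notin> ?C\<close> in_component_self by metis
    ultimately have "x \<in> H - {r}" "D = component E (H - {r}) x"
      using component_Diff_singleton_outside[OF assms(1)] x by auto
    then show ?thesis using component_in_components[of x "H - {r}" E] by simp
  qed
qed

lemma rtranclp_leave_component:
  assumes "sym E" "C \<in> components E (S - {r})"
  shows "(restr_rel E S)\<^sup>*\<^sup>* x y \<Longrightarrow> x \<in> C \<Longrightarrow> y \<notin> C \<Longrightarrow> (restr_rel E (C \<union> {r}))\<^sup>*\<^sup>* x r"
proof (induction rule: converse_rtranclp_induct)
  case (step x z)
  show ?case
  proof (cases "z \<in> C")
    case True
    then have "restr_rel E (C \<union> {r}) x z" using step(1,4) by (simp add: restr_rel_def)
    then show ?thesis using step(3)[OF True step(5)] by (rule converse_rtranclp_into_rtranclp)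
  next
    case False
    have "z = r"
    proof (rule ccontr)
      assume "z \<noteq> r"
      then have "restr_rel E (S - {r}) x z"
        using step(1,4) components_subset[OF assms(2)] by (auto simp: restr_rel_def)
      then have "z \<in> component E (S - {r}) x"
        using step(4) components_subset[OF assms(2)] unfolding component_def by blast
      with False show False using components_eq_component[OF assms step(4)] by simp
    qed
    then have "restr_rel E (C \<union> {r}) x r" using step(1,4) by (simp add: restr_rel_def)
    then show ?thesis by simp
  qed
qed simp

lemma Diff_component_subset_component:
  assumes "sym E" "connected_on E S" "r \<in> S" "C \<in> components E (S - {r})" "s \<in> C"
  shows "S - C \<subseteq> component E (S - {s}) r"
proof
  fix x assume x: "x \<in> S - C"
  have CS: "C \<subseteq> S - {r}" using components_subset[OF assms(4)] .
  have rs: "r \<in> S - {s}" using assms(3,5) CS by blast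
  show "x \<in> component E (S - {s}) r"
  proof (cases "x = r")
    case True then show ?thesis using in_component_self[OF rs] by simp
  next
    case False
    define D where "D = component E (S - {r}) x"
    have D: "D \<in> components E (S - {r})" "x \<in> D"
      unfolding D_def using x False by (auto intro: component_in_components in_component_self)
    then have "s \<notin> D" using components_disjoint[OF assms(1) D(1) assms(4)] assms(5) x by blast
    have "(restr_rel E S)\<^sup>*\<^sup>* x s" using connected_on_rtranclp[OF assms(2)] x assms(5) CS by blast
    then have "(restr_rel E (D \<union> {r}))\<^sup>*\<^sup>* x r"
      using rtranclp_leave_component[OF assms(1) D(1)] D(2) \<open>s \<notin> D\<close> by blast
    moreover have "D \<union> {r} \<subseteq> S - {s}" using components_subset[OF D(1)] \<open>s \<notin> D\<close> rs by blast
    ultimately have "(restr_rel E (S - {s}))\<^sup>*\<^sup>* x r" by (rule restr_rel_rtranclp_mono[rotated])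
    then show ?thesis
      using restr_rel_rtranclp_sym[OF assms(1)] rs unfolding component_def by blast
  qed
qed

section \<open>Search trees and their cost\<close>

lemma finite_vset: "finite (vset t)"
  by (induction t) auto

lemma search_tree_NodeD:
  assumes "search_tree E S (Node r ts)"
  shows "r \<in> S" "distinct (map vset ts)" "set (map vset ts) = components E (S - {r})"
    "\<And>t. t \<in> set ts \<Longrightarrow> search_tree E (vset t) t"
  using assms by (cases rule: search_tree.cases; simp)+

lemma search_tree_vset: "search_tree E S T \<Longrightarrow> vset T = S"
proof (induction rule: search_tree.induct)
  case (1 r S ts)
  have "(\<Union>t\<in>set ts. vset t) = \<Union>(components E (S - {r}))"
    using 1(3) by simp
  with 1(1) show ?case by (simp add: Union_components insert_absorb)
qed

lemma search_tree_distinct_children: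
  assumes "search_tree E S (Node r ts)"
  shows "distinct ts"
  using search_tree_NodeD(2)[OF assms] by (simp add: distinct_map)

lemma search_tree_child_component:
  assumes "search_tree E S (Node r ts)" "t \<in> set ts"
  shows "vset t \<in> components E (S - {r})"
  using search_tree_NodeD(3)[OF assms(1)] assms(2) by auto

lemma search_tree_child_subset:
  assumes "search_tree E S (Node r ts)" "t \<in> set ts"
  shows "vset t \<subseteq> S - {r}"
  using components_subset[OF search_tree_child_component[OF assms]] .

lemma search_tree_children_disjoint:
  assumes "sym E" "search_tree E S (Node r ts)" "t \<in> set ts" "u \<in> set ts" "t \<noteq> u"
  shows "vset t \<inter> vset u = {}"
proof -
  have "inj_on vset (set ts)" using search_tree_NodeD(2)[OF assms(2)] by (simp add: distinct_map)
  then have "vset t \<noteq> vset u" using assms(3-5) by (auto dest: inj_onD)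
  then show ?thesis
    by (rule components_disjoint[OF assms(1) search_tree_child_component[OF assms(2,3)]
        search_tree_child_component[OF assms(2,4)]])
qed

lemma search_tree_child_containing:
  "search_tree E S (Node r ts) \<Longrightarrow> x \<in> S \<Longrightarrow> x \<noteq> r \<Longrightarrow> \<exists>t\<in>set ts. x \<in> vset t"
  using search_tree_vset[of E S "Node r ts"] by auto

lemma search_tree_sum_weight:
  assumes "sym E" "search_tree E S (Node r ts)"
  shows "sum w S = w r + (\<Sum>t\<leftarrow>ts. sum w (vset t))"
proof -
  have "sum w (\<Union>t\<in>set ts. vset t) = (\<Sum>t\<in>set ts. sum w (vset t))"
    using search_tree_children_disjoint[OF assms] by (intro sum.UNION_disjoint) (auto simp: finite_vset)
  moreover have "r \<notin> (\<Union>t\<in>set ts. vset t)" using search_tree_child_subset[OF assms(2)] by blast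
  ultimately show ?thesis
    using search_tree_vset[OF assms(2)] search_tree_distinct_children[OF assms(2)]
    by (auto simp: finite_vset sum_list_distinct_conv_sum_set)
qed

lemma cost_aux_Suc:
  assumes "sym E"
  shows "search_tree E S T \<Longrightarrow> cost_aux w (Suc d) T = cost_aux w d T + sum w S"
proof (induction arbitrary: d rule: search_tree.induct)
  case (1 r S ts)
  have "search_tree E S (Node r ts)" using 1 by (intro search_tree.intros) auto
  then have "sum w S = w r + (\<Sum>t\<leftarrow>ts. sum w (vset t))"
    by (rule search_tree_sum_weight[OF assms])
  moreover have "(\<Sum>t\<leftarrow>ts. cost_aux w (Suc (Suc d)) t)
      = (\<Sum>t\<leftarrow>ts. cost_aux w (Suc d) t + sum w (vset t))"
    using 1(4) by (intro arg_cong[where f = sum_list] map_cong) auto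
  ultimately show ?case by (simp add: sum_list_addf algebra_simps)
qed

lemma cost_Node:
  assumes "sym E" "search_tree E S (Node r ts)"
  shows "cost w (Node r ts) = sum w S + (\<Sum>t\<leftarrow>ts. cost w t)"
proof -
  have "(\<Sum>t\<leftarrow>ts. cost_aux w (Suc 1) t) = (\<Sum>t\<leftarrow>ts. cost w t + sum w (vset t))"
    using cost_aux_Suc[OF assms(1) search_tree_NodeD(4)[OF assms(2)]]
    by (intro arg_cong[where f = sum_list] map_cong) (auto simp: cost_def)
  then show ?thesis
    using search_tree_sum_weight[OF assms, of w] by (simp add: cost_def sum_list_addf)
qed


lemma search_tree_Node_from_components:
  assumes "finite S" "r \<in> S" "\<And>D. D \<in> components E (S - {r}) \<Longrightarrow> search_tree E D (f D)"
  obtains ts where "search_tree E S (Node r ts)"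
    "\<And>g. (\<Sum>t\<leftarrow>ts. g t) = (\<Sum>D\<in>components E (S - {r}). (g (f D) :: real))"
proof -
  obtain Ds where Ds: "set Ds = components E (S - {r})" "distinct Ds"
    using finite_distinct_list[OF finite_components[OF finite_subset[OF _ assms(1)]]] by blast
  have "vset (f D) = D" if "D \<in> set Ds" for D
    using search_tree_vset assms(3) Ds(1) that by blast
  then have vset_f: "map vset (map f Ds) = Ds" by (simp add: map_idI)
  have "search_tree E S (Node r (map f Ds))"
  proof (rule search_tree.intros)
    show "\<forall>t\<in>set (map f Ds). search_tree E (vset t) t"
      using assms(3) Ds(1) search_tree_vset by fastforce
  qed (use assms(2) Ds vset_f in auto)
  moreover have "(\<Sum>t\<leftarrow>map f Ds. g t) = (\<Sum>D\<in>components E (S - {r}). g (f D))" for g :: "_ \<Rightarrow> real"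
    using sum_list_distinct_conv_sum_set[OF Ds(2), of "g \<circ> f"] Ds(1) by simp
  ultimately show thesis by (rule that)
qed

lemma search_tree_exists: "finite S \<Longrightarrow> S \<noteq> {} \<Longrightarrow> \<exists>T. search_tree E S T"
proof (induction "card S" arbitrary: S rule: less_induct)
  case less
  obtain r where r: "r \<in> S" using less.prems by blast
  define f where "f D = (SOME T. search_tree E D T)" for D
  have "search_tree E D (f D)" if D: "D \<in> components E (S - {r})" for D
  proof -
    have "D \<subset> S" using components_subset[OF D] r by blast
    then have "\<exists>T. search_tree E D T"
      using less components_nonempty[OF D] by (meson finite_subset psubset_card_mono psubset_imp_subset)
    then show ?thesis unfolding f_def by (rule someI_ex)
  qed
  then show ?case using search_tree_Node_from_components[OF less.prems(1) r] by metis
qed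

lemma finite_search_trees: "finite S \<Longrightarrow> finite {T. search_tree E S T}"
proof (induction "card S" arbitrary: S rule: less_induct)
  case less
  define U where "U = (\<Union>D\<in>{D. D \<subset> S}. {T. search_tree E D T})"
  have "finite U" unfolding U_def
  proof (rule finite_UN_I)
    have "{D. D \<subset> S} \<subseteq> Pow S" by auto
    then show "finite {D. D \<subset> S}" using less.prems by (simp add: finite_subset)
    fix D assume "D \<in> {D. D \<subset> S}"
    then show "finite {T. search_tree E D T}"
      using less by (meson finite_subset mem_Collect_eq psubset_card_mono psubset_imp_subset)
  qed
  have "{T. search_tree E S T} \<subseteq> (\<lambda>(r, ts). Node r ts) ` (S \<times> {ts. set ts \<subseteq> U \<and> length ts \<le> card S})"
  proof
    fix T assume "T \<in> {T. search_tree E S T}"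
    moreover obtain r ts where T: "T = Node r ts" by (cases T)
    ultimately have st: "search_tree E S (Node r ts)" by simp
    have r: "r \<in> S" using search_tree_NodeD(1)[OF st] .
    have "set ts \<subseteq> U"
      using search_tree_child_subset[OF st] search_tree_NodeD(4)[OF st] r unfolding U_def by blast
    moreover have "length ts \<le> card S"
    proof -
      have "length ts = card (components E (S - {r}))"
        using distinct_card[OF search_tree_NodeD(2)[OF st]] search_tree_NodeD(3)[OF st] by simp
      also have "\<dots> \<le> card (S - {r})"
        unfolding components_def by (rule card_image_le) (use less.prems in simp)
      also have "\<dots> \<le> card S" using less.prems by (simp add: card_mono)
      finally show ?thesis .
    qed
    ultimately show "T \<in> (\<lambda>(r, ts). Node r ts) ` (S \<times> {ts. set ts \<subseteq> U \<and> length ts \<le> card S})"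
      using r T by auto
  qed
  moreover have "finite (S \<times> {ts. set ts \<subseteq> U \<and> length ts \<le> card S})"
    using less.prems \<open>finite U\<close> by (simp add: finite_lists_length_le)
  ultimately show ?case using finite_subset by blast
qed

lemma OPT_attained:
  assumes "finite S" "S \<noteq> {}"
  obtains T where "search_tree E S T" "cost w T = OPT S E w"
proof -
  have "finite {cost w T | T. search_tree E S T}"
    using finite_search_trees[OF assms(1)] by (simp add: setcompr_eq_image)
  moreover have "{cost w T | T. search_tree E S T} \<noteq> {}"
    using search_tree_exists[OF assms] by auto
  ultimately show thesis
    using Min_in that unfolding OPT_def by fastforce
qed

lemma OPT_le_cost: "finite S \<Longrightarrow> search_tree E S T \<Longrightarrow> OPT S E w \<le> cost w T"
  unfolding OPT_def using finite_search_trees[of S E]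
  by (intro Min_le) (auto simp: setcompr_eq_image)

lemma OPT_le_root_split:
  assumes "sym E" "finite C" "r \<in> C"
  shows "OPT C E w \<le> sum w C + (\<Sum>D\<in>components E (C - {r}). OPT D E w)"
proof -
  define f where "f D = (SOME T. search_tree E D T \<and> cost w T = OPT D E w)" for D
  have f: "search_tree E D (f D) \<and> cost w (f D) = OPT D E w"
    if D: "D \<in> components E (C - {r})" for D
  proof -
    have "finite D" using components_subset[OF D] assms(2) finite_subset by blast
    then have "\<exists>T. search_tree E D T \<and> cost w T = OPT D E w"
      using OPT_attained components_nonempty[OF D] by metis
    then show ?thesis unfolding f_def by (rule someI_ex)
  qed
  obtain ts where ts: "search_tree E C (Node r ts)"
    "\<And>g. (\<Sum>t\<leftarrow>ts. g t) = (\<Sum>D\<in>components E (C - {r}). (g (f D) :: real))"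
    using search_tree_Node_from_components[OF assms(2,3), of E f] f by blast
  have "OPT C E w \<le> cost w (Node r ts)" by (rule OPT_le_cost[OF assms(2) ts(1)])
  also have "\<dots> = sum w C + (\<Sum>D\<in>components E (C - {r}). cost w (f D))"
    using cost_Node[OF assms(1) ts(1), of w] ts(2)[of "cost w"] by simp
  also have "\<dots> = sum w C + (\<Sum>D\<in>components E (C - {r}). OPT D E w)"
    using f by simp
  finally show ?thesis .
qed

section \<open>Induced costs\<close>

text \<open>This is the
  weighted cost of the search tree that T induces on H: a vertex of H is charged once for each of
  its ancestors in T (itself included) that lies in H.\<close>
fun induced_cost :: "('a \<Rightarrow> real) \<Rightarrow> 'a set \<Rightarrow> 'a stree \<Rightarrow> real" where
  "induced_cost w H (Node r ts) =
     (if r \<in> H then sum w (H \<inter> vset (Node r ts)) else 0) + (\<Sum>t\<leftarrow>ts. induced_cost w H t)"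

declare induced_cost.simps [simp del]

lemma induced_cost_nonneg: "\<forall>x\<in>H. 0 \<le> w x \<Longrightarrow> 0 \<le> induced_cost w H t"
proof (induction t)
  case (Node r ts)
  have "0 \<le> sum w (H \<inter> vset (Node r ts))" using Node.prems by (intro sum_nonneg) auto
  moreover have "0 \<le> (\<Sum>t\<leftarrow>ts. induced_cost w H t)" using Node by (intro sum_list_nonneg) auto
  ultimately show ?case by (simp add: induced_cost.simps del: vset.simps)
qed

lemma induced_cost_inter: "vset t \<subseteq> K \<Longrightarrow> induced_cost w (H \<inter> K) t = induced_cost w H t"
proof (induction t)
  case (Node r ts)
  have "(\<Sum>t\<leftarrow>ts. induced_cost w (H \<inter> K) t) = (\<Sum>t\<leftarrow>ts. induced_cost w H t)"
    using Node by (intro arg_cong[where f = sum_list] map_cong) auto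
  moreover have "H \<inter> K \<inter> vset (Node r ts) = H \<inter> vset (Node r ts)" "r \<in> H \<inter> K \<longleftrightarrow> r \<in> H"
    using Node.prems by auto
  ultimately show ?case by (simp only: induced_cost.simps)
qed

lemma induced_cost_singleton_ge:
  assumes "0 \<le> w r"
  shows "r \<in> vset t \<Longrightarrow> w r \<le> induced_cost w {r} t"
proof (induction t)
  case (Node x ts)
  have nonneg: "0 \<le> induced_cost w {r} t" for t
    using assms by (intro induced_cost_nonneg) simp
  have sum_nonneg: "0 \<le> (\<Sum>t\<leftarrow>ts. induced_cost w {r} t)"
    using nonneg by (intro sum_list_nonneg) auto
  show ?case
  proof (cases "x = r")
    case True
    then show ?thesis using sum_nonneg by (simp add: induced_cost.simps)
  next
    case False
    with Node.prems obtain t where t: "t \<in> set ts" "r \<in> vset t" by auto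
    have "w r \<le> induced_cost w {r} t" using Node.IH[OF t] .
    also have "\<dots> \<le> (\<Sum>t\<leftarrow>ts. induced_cost w {r} t)"
      using t(1) nonneg by (intro member_le_sum_list) auto
    finally show ?thesis using False by (simp add: induced_cost.simps del: vset.simps)
  qed
qed

lemma cost_eq_induced_cost:
  assumes "sym E"
  shows "search_tree E S T \<Longrightarrow> cost w T = induced_cost w S T"
proof (induction rule: search_tree.induct)
  case (1 r S ts)
  have st: "search_tree E S (Node r ts)" using 1 by (intro search_tree.intros) auto
  have children: "cost w t = induced_cost w S t" if t: "t \<in> set ts" for t
  proof -
    have "S \<inter> vset t = vset t" using search_tree_child_subset[OF st t] by blast
    then have "induced_cost w S t = induced_cost w (vset t) t"
      using induced_cost_inter[of t "vset t" w S] by simp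
    then show "cost w t = induced_cost w S t" using 1(4) t by simp
  qed
  have "cost w (Node r ts) = sum w S + (\<Sum>t\<leftarrow>ts. cost w t)" by (rule cost_Node[OF assms st])
  also have "(\<Sum>t\<leftarrow>ts. cost w t) = (\<Sum>t\<leftarrow>ts. induced_cost w S t)"
    using children by (intro arg_cong[where f = sum_list] map_cong) auto
  also have "sum w S + \<dots> = induced_cost w S (Node r ts)"
    using search_tree_vset[OF st] search_tree_NodeD(1)[OF st]
    by (simp only: induced_cost.simps if_True Int_absorb)
  finally show ?case .
qed

lemma sum_sum_list_swap: "(\<Sum>x\<in>A. \<Sum>y\<leftarrow>ys. f x y) = (\<Sum>y\<leftarrow>ys. \<Sum>x\<in>A. f x y)"
  by (induction ys) (simp_all add: sum.distrib)

lemma sum_if_mem_unique: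
  assumes "finite \<F>" "F0 \<in> \<F>" "x \<in> F0" "\<And>F. F \<in> \<F> \<Longrightarrow> x \<in> F \<Longrightarrow> F = F0"
  shows "(\<Sum>F\<in>\<F>. if x \<in> F then g F else 0) = g F0"
proof -
  have "(\<Sum>F\<in>\<F>. if x \<in> F then g F else 0) = (\<Sum>F\<in>\<F>. if F = F0 then g F else 0)"
    using assms(3) by (intro sum.cong) (auto dest: assms(4))
  also have "\<dots> = g F0" using assms(1,2) by (simp add: sum.delta')
  finally show ?thesis .
qed

lemma sum_induced_cost_le:
  assumes "finite \<F>" "\<And>F G. F \<in> \<F> \<Longrightarrow> G \<in> \<F> \<Longrightarrow> F \<noteq> G \<Longrightarrow> F \<inter> G = {}"
    "\<Union>\<F> \<subseteq> A" "\<forall>x\<in>A. 0 \<le> w x"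
  shows "(\<Sum>F\<in>\<F>. induced_cost w F t) \<le> induced_cost w A t"
proof (induction t)
  case (Node r ts)
  let ?V = "vset (Node r ts)"
  have root: "(\<Sum>F\<in>\<F>. if r \<in> F then sum w (F \<inter> ?V) else 0) \<le> (if r \<in> A then sum w (A \<inter> ?V) else 0)"
  proof (cases "\<exists>F0\<in>\<F>. r \<in> F0")
    case True
    then obtain F0 where F0: "F0 \<in> \<F>" "r \<in> F0" by blast
    have "(\<Sum>F\<in>\<F>. if r \<in> F then sum w (F \<inter> ?V) else 0) = sum w (F0 \<inter> ?V)"
      using assms(2) F0 by (intro sum_if_mem_unique[OF assms(1) F0]) blast
    also have "\<dots> \<le> sum w (A \<inter> ?V)"
      using assms(3,4) F0 finite_vset[of "Node r ts"] by (intro sum_mono2) auto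
    finally show ?thesis using F0 assms(3) by auto
  next
    case False
    then have "(\<Sum>F\<in>\<F>. if r \<in> F then sum w (F \<inter> ?V) else 0) = 0" by (intro sum.neutral) auto
    moreover have "0 \<le> sum w (A \<inter> ?V)" using assms(4) by (intro sum_nonneg) auto
    ultimately show ?thesis by (simp del: vset.simps)
  qed
  have "(\<Sum>F\<in>\<F>. \<Sum>t\<leftarrow>ts. induced_cost w F t) \<le> (\<Sum>t\<leftarrow>ts. induced_cost w A t)"
    unfolding sum_sum_list_swap using Node.IH by (intro sum_list_mono) auto
  with root show ?case by (simp add: induced_cost.simps sum.distrib)
qed

lemma component_inter_child:
  assumes "sym E" "search_tree E S (Node r ts)" "H \<subseteq> S - {r}" "t \<in> set ts"
    "x \<in> H" "x \<in> vset t"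
  shows "component E (H \<inter> vset t) x = component E H x"
proof (rule component_restrict)
  show "x \<in> H \<inter> vset t" "H \<inter> vset t \<subseteq> H" using assms(5,6) by auto
  have "vset t = component E (S - {r}) x"
    using components_eq_component[OF assms(1) search_tree_child_component[OF assms(2,4)] assms(6)] .
  moreover have "component E H x \<subseteq> component E (S - {r}) x" using component_mono[OF assms(3)] .
  ultimately show "component E H x \<subseteq> H \<inter> vset t" using component_subset[of E H x] by blast
qed

lemma sum_components_children:
  assumes "sym E" "search_tree E S (Node r ts)" "H \<subseteq> S - {r}"
  shows "(\<Sum>C\<in>components E H. f C) = (\<Sum>t\<in>set ts. \<Sum>C\<in>components E (H \<inter> vset t). f C)"
proof -
  have "components E H = (\<Union>t\<in>set ts. components E (H \<inter> vset t))"
  proof (intro equalityI subsetI)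
    fix C assume "C \<in> components E H"
    then obtain x where x: "x \<in> H" "C = component E H x" unfolding components_def by blast
    moreover obtain t where t: "t \<in> set ts" "x \<in> vset t"
      using search_tree_child_containing[OF assms(2), of x] x(1) assms(3) by blast
    ultimately have "C = component E (H \<inter> vset t) x" "x \<in> H \<inter> vset t"
      using component_inter_child[OF assms t(1)] by auto
    then show "C \<in> (\<Union>t\<in>set ts. components E (H \<inter> vset t))"
      using component_in_components[of x "H \<inter> vset t" E] t(1) by auto
  next
    fix C assume "C \<in> (\<Union>t\<in>set ts. components E (H \<inter> vset t))"
    then obtain t x where t: "t \<in> set ts" "x \<in> H \<inter> vset t" "C = component E (H \<inter> vset t) x"
      unfolding components_def by blast
    then have "C = component E H x" using component_inter_child[OF assms t(1)] by simp
    then show "C \<in> components E H" using t(2) component_in_components[of x H E] by simp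
  qed
  moreover have "components E (H \<inter> vset t) \<inter> components E (H \<inter> vset u) = {}"
    if "t \<in> set ts" "u \<in> set ts" "t \<noteq> u" for t u
  proof -
    have "vset t \<inter> vset u = {}" using search_tree_children_disjoint[OF assms(1,2) that] .
    moreover have "C \<noteq> {}" "C \<subseteq> vset t" "C \<subseteq> vset u"
      if "C \<in> components E (H \<inter> vset t)" "C \<in> components E (H \<inter> vset u)" for C
      using components_nonempty[OF that(1)] components_subset[OF that(1)]
        components_subset[OF that(2)] by auto
    ultimately show ?thesis by blast
  qed
  ultimately show ?thesis
    by (simp add: sum.UNION_disjoint finite_components finite_vset)
qed

lemma sum_components_Diff_singleton:
  assumes "sym E" "finite H" "r \<in> H"
  shows "(\<Sum>C\<in>components E (H - {r}). f C) =
    (\<Sum>C\<in>components E (component E H r - {r}). f C) + (\<Sum>C\<in>components E H - {component E H r}. f C)"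
proof -
  let ?C = "component E H r"
  have "components E (?C - {r}) \<inter> (components E H - {?C}) = {}"
  proof (rule ccontr)
    assume "\<not> ?thesis"
    then obtain D where D: "D \<in> components E (?C - {r})" "D \<in> components E H" "D \<noteq> ?C" by blast
    have "D \<inter> ?C = {}"
      using components_disjoint[OF assms(1) D(2) component_in_components[OF assms(3)] D(3)] .
    moreover have "D \<subseteq> ?C" using components_subset[OF D(1)] by blast
    ultimately show False using components_nonempty[OF D(1)] by blast
  qed
  moreover have "finite (?C - {r})"
    using finite_subset[OF component_subset assms(2)] by simp
  then have "finite (components E (?C - {r}))" "finite (components E H - {?C})"
    using finite_components[OF assms(2)] by (simp_all add: finite_components)
  ultimately show ?thesis
    unfolding components_Diff_singleton[OF assms(1,3)] by (rule sum.union_disjoint[rotated 2])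
qed


lemma sum_OPT_components_le_children:
  assumes "sym E" "search_tree E S (Node r ts)" "H \<subseteq> S - {r}"
    and IH: "\<And>t K. t \<in> set ts \<Longrightarrow> K \<subseteq> vset t \<Longrightarrow>
      (\<Sum>C\<in>components E K. OPT C E w) \<le> induced_cost w K t"
  shows "(\<Sum>C\<in>components E H. OPT C E w) \<le> (\<Sum>t\<leftarrow>ts. induced_cost w H t)"
proof -
  have "(\<Sum>C\<in>components E H. OPT C E w) = (\<Sum>t\<in>set ts. \<Sum>C\<in>components E (H \<inter> vset t). OPT C E w)"
    by (rule sum_components_children[OF assms(1-3)])
  also have "\<dots> \<le> (\<Sum>t\<in>set ts. induced_cost w H t)"
  proof (rule sum_mono)
    fix t assume "t \<in> set ts"
    then have "(\<Sum>C\<in>components E (H \<inter> vset t). OPT C E w) \<le> induced_cost w (H \<inter> vset t) t"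
      by (rule IH) simp
    then show "(\<Sum>C\<in>components E (H \<inter> vset t). OPT C E w) \<le> induced_cost w H t"
      by (simp add: induced_cost_inter)
  qed
  also have "\<dots> = (\<Sum>t\<leftarrow>ts. induced_cost w H t)"
    using sum_list_distinct_conv_sum_set[OF search_tree_distinct_children[OF assms(2)], symmetric] .
  finally show ?thesis .
qed

text \<open>Restricting T to the vertices of H yields search trees of the components of H; the
  root of T, when it lies in H, becomes the root of the induced tree of its component.\<close>
lemma sum_OPT_components_le_induced_cost:
  assumes "sym E"
  shows "search_tree E S T \<Longrightarrow> H \<subseteq> S \<Longrightarrow> \<forall>x\<in>S. 0 \<le> w x \<Longrightarrow>
    (\<Sum>C\<in>components E H. OPT C E w) \<le> induced_cost w H T"
proof (induction arbitrary: H rule: search_tree.induct)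
  case (1 r S ts)
  have st: "search_tree E S (Node r ts)" using 1 by (intro search_tree.intros) auto
  have fin: "finite H" using finite_subset[OF 1(5)] search_tree_vset[OF st] finite_vset by metis
  have IH: "(\<Sum>C\<in>components E K. OPT C E w) \<le> induced_cost w K t"
    if "t \<in> set ts" "K \<subseteq> vset t" for t K
    using 1(4) search_tree_child_subset[OF st] 1(6) that by blast
  have children: "(\<Sum>C\<in>components E H. OPT C E w) \<le> (\<Sum>t\<leftarrow>ts. induced_cost w H t)"
    if "H \<subseteq> S - {r}" for H
    by (rule sum_OPT_components_le_children[OF assms st that IH])
  show ?case
  proof (cases "r \<in> H")
    case False
    then show ?thesis using children[of H] 1(5) by (auto simp: induced_cost.simps)
  next
    case True
    let ?C = "component E H r"
    have remove: "(\<Sum>C\<in>components E H. OPT C E w) = OPT ?C E w + (\<Sum>C\<in>components E H - {?C}. OPT C E w)"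
      using sum.remove[OF finite_components[OF fin] component_in_components[OF True]] .
    have root: "OPT ?C E w \<le> sum w ?C + (\<Sum>D\<in>components E (?C - {r}). OPT D E w)"
      using finite_subset[OF component_subset fin] True
      by (intro OPT_le_root_split[OF assms]) (auto intro: in_component_self)
    have "sum w ?C \<le> sum w H"
      using 1(5,6) component_subset[of E H r] fin by (intro sum_mono2) auto
    moreover have "(\<Sum>D\<in>components E (?C - {r}). OPT D E w) + (\<Sum>C\<in>components E H - {?C}. OPT C E w)
        = (\<Sum>C\<in>components E (H - {r}). OPT C E w)"
      by (rule sum_components_Diff_singleton[OF assms fin True, symmetric])
    moreover have "\<dots> \<le> (\<Sum>t\<leftarrow>ts. induced_cost w (H - {r}) t)"
      using 1(5) by (intro children) blast
    moreover have "\<dots> = (\<Sum>t\<leftarrow>ts. induced_cost w H t)"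
      using search_tree_child_subset[OF st] induced_cost_inter[of _ "- {r}" w H]
      by (intro arg_cong[where f = sum_list] map_cong) (auto simp: Diff_eq)
    moreover have "induced_cost w H (Node r ts) = sum w H + (\<Sum>t\<leftarrow>ts. induced_cost w H t)"
      using True 1(5) search_tree_vset[OF st] by (simp add: induced_cost.simps Int_absorb2)
    ultimately show ?thesis using remove root by linarith
  qed
qed

section \<open>The gain at the root of a centroid tree\<close>

definition split_excess :: "('a \<times> 'a) set \<Rightarrow> ('a \<Rightarrow> real) \<Rightarrow> 'a set \<Rightarrow> 'a \<Rightarrow> 'a stree \<Rightarrow> real" where
  "split_excess E w S r u =
     induced_cost w S u - (\<Sum>H\<in>components E (S - {r}). induced_cost w H u)"

lemma OPT_split_ge_split_excess:
  assumes "sym E" "finite S" "\<forall>x\<in>S. 0 \<le> w x" "search_tree E S T" "cost w T = OPT S E w"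
  shows "split_excess E w S r T \<le> OPT S E w - (\<Sum>H\<in>components E (S - {r}). OPT H E w)"
proof -
  have "OPT H E w \<le> induced_cost w H T" if H: "H \<in> components E (S - {r})" for H
  proof -
    have "components E H = {H}"
      using components_connected_on[OF connected_on_components[OF assms(1) H] components_nonempty[OF H]] .
    moreover have "H \<subseteq> S" using components_subset[OF H] by blast
    ultimately show ?thesis
      using sum_OPT_components_le_induced_cost[OF assms(1,4), of H w] assms(3) by simp
  qed
  then have "(\<Sum>H\<in>components E (S - {r}). OPT H E w)
      \<le> (\<Sum>H\<in>components E (S - {r}). induced_cost w H T)"
    by (rule sum_mono)
  moreover have "OPT S E w = induced_cost w S T"
    using assms(5) cost_eq_induced_cost[OF assms(1,4)] by simp
  ultimately show ?thesis unfolding split_excess_def by linarith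
qed

lemma induced_cost_singleton_le_split_excess:
  assumes "sym E" "finite S" "r \<in> S" "\<forall>x\<in>S. 0 \<le> w x"
  shows "induced_cost w {r} u \<le> split_excess E w S r u"
proof -
  let ?\<H> = "components E (S - {r})"
  have fin: "finite ?\<H>" using assms(2) by (simp add: finite_components)
  have notin: "{r} \<notin> ?\<H>" using components_subset[of "{r}" E "S - {r}"] by blast
  have "(\<Sum>F\<in>insert {r} ?\<H>. induced_cost w F u) \<le> induced_cost w S u"
  proof (rule sum_induced_cost_le)
    show "\<Union>(insert {r} ?\<H>) \<subseteq> S" using Union_components[of E "S - {r}"] assms(3) by blast
    fix F G assume "F \<in> insert {r} ?\<H>" "G \<in> insert {r} ?\<H>" "F \<noteq> G"
    then show "F \<inter> G = {}"
      using components_disjoint[OF assms(1), of F "S - {r}" G]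
        components_subset[of F E "S - {r}"] components_subset[of G E "S - {r}"] by auto
  qed (use fin assms(4) in auto)
  then show ?thesis unfolding split_excess_def sum.insert[OF fin notin] by simp
qed

lemma split_excess_ge_weight:
  assumes "sym E" "finite S" "r \<in> S" "\<forall>x\<in>S. 0 \<le> w x"
  shows split_excess_nonneg: "0 \<le> split_excess E w S r u"
    and split_excess_ge_root_weight: "r \<in> vset u \<Longrightarrow> w r \<le> split_excess E w S r u"
  using induced_cost_singleton_le_split_excess[OF assms, of u]
    induced_cost_nonneg[of "{r}" w u] induced_cost_singleton_ge[of w r u] assms(3,4) by auto


lemma split_excess_Node:
  assumes "sym E" "finite S" "vset (Node x us) \<subseteq> S"
  shows "split_excess E w S r (Node x us) = sum w (vset (Node x us))
    - (if x = r then 0 else sum w (component E (S - {r}) x \<inter> vset (Node x us)))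
    + (\<Sum>u\<leftarrow>us. split_excess E w S r u)"
proof -
  let ?V = "vset (Node x us)" and ?\<H> = "components E (S - {r})"
  have x: "x \<in> S" using assms(3) by simp
  have root: "(\<Sum>H\<in>?\<H>. if x \<in> H then sum w (H \<inter> ?V) else 0)
      = (if x = r then 0 else sum w (component E (S - {r}) x \<inter> ?V))"
  proof (cases "x = r")
    case True
    have "x \<notin> H" if "H \<in> ?\<H>" for H using components_subset[OF that] True by blast
    then have "(\<Sum>H\<in>?\<H>. if x \<in> H then sum w (H \<inter> ?V) else 0) = 0" by (intro sum.neutral) simp
    with True show ?thesis by simp
  next
    case False
    then have "x \<in> S - {r}" using x by simp
    then have "(\<Sum>H\<in>?\<H>. if x \<in> H then sum w (H \<inter> ?V) else 0)
        = sum w (component E (S - {r}) x \<inter> ?V)"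
      using components_eq_component[OF assms(1), of _ "S - {r}" x] assms(2)
      by (intro sum_if_mem_unique component_in_components in_component_self finite_components) auto
    with False show ?thesis by simp
  qed
  have "induced_cost w S (Node x us) = sum w ?V + (\<Sum>u\<leftarrow>us. induced_cost w S u)"
    using x assms(3) by (simp add: induced_cost.simps Int_absorb1 del: vset.simps)
  moreover have "(\<Sum>H\<in>?\<H>. induced_cost w H (Node x us))
      = (\<Sum>H\<in>?\<H>. if x \<in> H then sum w (H \<inter> ?V) else 0) + (\<Sum>u\<leftarrow>us. \<Sum>H\<in>?\<H>. induced_cost w H u)"
    by (simp only: induced_cost.simps sum.distrib sum_sum_list_swap)
  moreover have "(\<Sum>u\<leftarrow>us. split_excess E w S r u)
      = (\<Sum>u\<leftarrow>us. induced_cost w S u) - (\<Sum>u\<leftarrow>us. \<Sum>H\<in>?\<H>. induced_cost w H u)"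
    unfolding split_excess_def by (rule sum_list_subtractf)
  ultimately show ?thesis using root unfolding split_excess_def by linarith
qed

lemma split_excess_Node_ge:
  assumes "sym E" "finite S" "r \<in> S" "\<forall>x\<in>S. 0 \<le> w x"
    and st: "search_tree E V (Node x us)" and "V \<subseteq> S" "r \<in> V"
  shows split_excess_Node_ge_root: "x = r \<Longrightarrow> sum w V \<le> split_excess E w S r (Node x us)"
    and split_excess_Node_ge_child: "x \<noteq> r \<Longrightarrow> \<exists>u\<in>set us. r \<in> vset u \<and>
      sum w V - sum w (component E (S - {r}) x \<inter> V) + split_excess E w S r u
        \<le> split_excess E w S r (Node x us)"
proof -
  have V: "vset (Node x us) = V" using search_tree_vset[OF st] .
  have nonneg: "0 \<le> split_excess E w S r u" for u
    by (rule split_excess_nonneg[OF assms(1-4)])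
  have excess: "split_excess E w S r (Node x us) = sum w V
      - (if x = r then 0 else sum w (component E (S - {r}) x \<inter> V)) + (\<Sum>u\<leftarrow>us. split_excess E w S r u)"
    unfolding V[symmetric] using assms(6) V by (intro split_excess_Node[OF assms(1,2)]) simp
  show "x = r \<Longrightarrow> sum w V \<le> split_excess E w S r (Node x us)"
    using excess sum_list_nonneg[of "map (split_excess E w S r) us"] nonneg by auto
  assume "x \<noteq> r"
  then obtain u where u: "u \<in> set us" "r \<in> vset u"
    using search_tree_child_containing[OF st assms(7)] by blast
  moreover have "split_excess E w S r u \<le> (\<Sum>u\<leftarrow>us. split_excess E w S r u)"
    using u(1) nonneg by (intro member_le_sum_list) auto
  ultimately show "\<exists>u\<in>set us. r \<in> vset u \<and> sum w V - sum w (component E (S - {r}) x \<inter> V)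
      + split_excess E w S r u \<le> split_excess E w S r (Node x us)"
    using excess \<open>x \<noteq> r\<close> by auto
qed


lemma split_excess_ge_cases:
  assumes "sym E" "finite S" "r \<in> S" "\<forall>x\<in>S. 0 \<le> w x"
    and "search_tree E V u" "V \<subseteq> S" "r \<in> V"
  shows "sum w V \<le> split_excess E w S r u \<or>
    (\<exists>H\<in>components E (S - {r}). sum w V - sum w H + w r \<le> split_excess E w S r u)"
proof -
  obtain x us where u: "u = Node x us" by (cases u)
  note st = assms(5)[unfolded u]
  show ?thesis
  proof (cases "x = r")
    case True
    then show ?thesis using split_excess_Node_ge_root[OF assms(1-4) st assms(6,7)] u by simp
  next
    case False
    let ?H = "component E (S - {r}) x"
    have "x \<in> S - {r}" using search_tree_NodeD(1)[OF st] assms(6) False by blast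
    then have H: "?H \<in> components E (S - {r})" by (rule component_in_components)
    have "sum w (?H \<inter> V) \<le> sum w ?H"
      using assms(2,4) components_subset[OF H] by (intro sum_mono2) (auto intro: finite_subset)
    moreover obtain v where "r \<in> vset v"
      "sum w V - sum w (?H \<inter> V) + split_excess E w S r v \<le> split_excess E w S r u"
      using split_excess_Node_ge_child[OF assms(1-4) st assms(6,7) False] u by blast
    moreover note split_excess_ge_root_weight[OF assms(1-4) \<open>r \<in> vset v\<close>]
    ultimately show ?thesis using H by force
  qed
qed

lemma sum_diff_le_sum:
  fixes w :: "'a \<Rightarrow> real"
  assumes "finite S" "B \<subseteq> S" "S - B \<subseteq> A" "A \<subseteq> S" "\<forall>x\<in>S. 0 \<le> w x"
  shows "sum w S - sum w B \<le> sum w A"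
proof -
  have "sum w S - sum w B = sum w (S - B)" by (rule sum_diff[OF assms(1,2), symmetric])
  also have "\<dots> \<le> sum w A"
    using assms(4,5) by (intro sum_mono2[OF finite_subset[OF assms(4,1)] assms(3)]) auto
  finally show ?thesis .
qed

lemma OPT_split_cases:
  assumes "sym E" "finite S" "connected_on E S" "r \<in> S" "\<forall>x\<in>S. 0 \<le> w x"
  defines "Y \<equiv> OPT S E w - (\<Sum>H\<in>components E (S - {r}). OPT H E w)"
  shows "sum w S \<le> Y \<or> (\<exists>Hj\<in>components E (S - {r}). \<exists>Hi\<in>components E (S - {r}).
    sum w S - sum w Hj + w r \<le> Y \<and>
    (2 * (sum w S - sum w Hj) \<le> Y \<or> 2 * (sum w S - sum w Hj) - sum w Hi + w r \<le> Y))"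
proof -
  obtain T where T: "search_tree E S T" "cost w T = OPT S E w"
    using OPT_attained[OF assms(2)] assms(4) by blast
  obtain s ss where Ts: "T = Node s ss" by (cases T)
  note st = T(1)[unfolded Ts]
  have Y: "split_excess E w S r (Node s ss) \<le> Y"
    using OPT_split_ge_split_excess[OF assms(1,2,5) T] Ts unfolding Y_def by simp
  show ?thesis
  proof (cases "s = r")
    case True
    then show ?thesis
      using split_excess_Node_ge_root[OF assms(1,2,4,5) st order_refl assms(4)] Y by simp
  next
    case False
    let ?Hj = "component E (S - {r}) s"
    have "s \<in> S - {r}" using search_tree_NodeD(1)[OF st] False by simp
    then have Hj: "?Hj \<in> components E (S - {r})" "s \<in> ?Hj"
      by (simp_all add: component_in_components in_component_self)
    obtain u where u: "u \<in> set ss" "r \<in> vset u"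
      and top: "sum w S - sum w (?Hj \<inter> S) + split_excess E w S r u \<le> split_excess E w S r (Node s ss)"
      using split_excess_Node_ge_child[OF assms(1,2,4,5) st order_refl assms(4) False] by blast
    have "?Hj \<inter> S = ?Hj" using components_subset[OF Hj(1)] by blast
    with top Y have first: "sum w S - sum w ?Hj + split_excess E w S r u \<le> Y" by simp
    have "vset u = component E (S - {s}) r"
      using components_eq_component[OF assms(1) search_tree_child_component[OF st u(1)] u(2)] .
    then have "S - ?Hj \<subseteq> vset u"
      using Diff_component_subset_component[OF assms(1,3,4) Hj] by simp
    moreover have uS: "vset u \<subseteq> S" using search_tree_child_subset[OF st u(1)] by blast
    ultimately have "sum w S - sum w ?Hj \<le> sum w (vset u)"
      using components_subset[OF Hj(1)] assms(2,5) by (intro sum_diff_le_sum) auto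
    moreover note split_excess_ge_root_weight[OF assms(1,2,4,5) u(2)]
    moreover note split_excess_ge_cases[OF assms(1,2,4,5) search_tree_NodeD(4)[OF st u(1)] uS u(2)]
    ultimately show ?thesis using first Hj(1) by (smt (verit))
  qed
qed

text \<open>The inequality needed to turn the case analysis of OPT_split_cases (with m = w S,
  x = w r and a, b the weights of the components Hj, Hi, each at most \<alpha> m) into the bound
  c w S + \<beta> w r on the gain OPT S - \<Sum>H.\<close>
definition gain_bound :: "real \<Rightarrow> real \<Rightarrow> real \<Rightarrow> bool" where
  "gain_bound \<alpha> c \<beta> \<longleftrightarrow> (\<forall>m x a b Y :: real.
     0 \<le> x \<longrightarrow> x \<le> m \<longrightarrow> 0 \<le> a \<longrightarrow> a \<le> \<alpha> * m \<longrightarrow> 0 \<le> b \<longrightarrow> b \<le> \<alpha> * m \<longrightarrow>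
     (m \<le> Y \<or> (m - a + x \<le> Y \<and> (2 * (m - a) \<le> Y \<or> 2 * (m - a) - b + x \<le> Y))) \<longrightarrow>
     c * m + \<beta> * x \<le> Y)"

lemma OPT_split_ge_gain:
  assumes "sym E" "finite S" "connected_on E S" "\<forall>x\<in>S. 0 \<le> w x"
    and "is_centroid E w \<alpha> S r" "0 \<le> \<alpha>" "gain_bound \<alpha> c \<beta>"
  shows "c * sum w S + \<beta> * w r \<le> OPT S E w - (\<Sum>H\<in>components E (S - {r}). OPT H E w)"
proof -
  let ?Y = "OPT S E w - (\<Sum>H\<in>components E (S - {r}). OPT H E w)"
  have r: "r \<in> S" using assms(5) unfolding is_centroid_def by blast
  have H: "0 \<le> sum w H \<and> sum w H \<le> \<alpha> * sum w S" if "H \<in> components E (S - {r})" for H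
    using assms(4,5) components_subset[OF that] that unfolding is_centroid_def
    by (auto intro: sum_nonneg)
  have x: "0 \<le> w r" "w r \<le> sum w S"
    using assms(4) r member_le_sum[OF r _ assms(2), of w] by auto
  have bound: "c * sum w S + \<beta> * w r \<le> ?Y"
    if "0 \<le> a \<and> a \<le> \<alpha> * sum w S" "0 \<le> b \<and> b \<le> \<alpha> * sum w S"
      "sum w S \<le> ?Y \<or> (sum w S - a + w r \<le> ?Y \<and>
        (2 * (sum w S - a) \<le> ?Y \<or> 2 * (sum w S - a) - b + w r \<le> ?Y))" for a b
    using assms(7) x that unfolding gain_bound_def by blast
  have "0 \<le> \<alpha> * sum w S" using assms(4,6) by (simp add: sum_nonneg)
  then show ?thesis
    using OPT_split_cases[OF assms(1-3) r assms(4)]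
  proof (elim disjE bexE)
    assume "0 \<le> \<alpha> * sum w S" "sum w S \<le> ?Y"
    then show ?thesis using bound[of 0 0] by simp
  next
    fix Hj Hi assume "Hj \<in> components E (S - {r})" "Hi \<in> components E (S - {r})"
      "sum w S - sum w Hj + w r \<le> ?Y \<and>
       (2 * (sum w S - sum w Hj) \<le> ?Y \<or> 2 * (sum w S - sum w Hj) - sum w Hi + w r \<le> ?Y)"
    then show ?thesis using bound[of "sum w Hj" "sum w Hi"] H by blast
  qed
qed

lemma sum_list_children_eq_sum_components:
  assumes "search_tree E S (Node r ts)"
  shows "(\<Sum>t\<leftarrow>ts. f (vset t)) = (\<Sum>H\<in>components E (S - {r}). f H)"
  using sum_list_distinct_conv_sum_set[OF search_tree_NodeD(2)[OF assms], of f]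
    search_tree_NodeD(3)[OF assms] by (simp add: o_def)

lemma cost_centroid_tree_le:
  assumes "sym E" "0 \<le> \<alpha>" "gain_bound \<alpha> c \<beta>"
  shows "search_tree E S T \<Longrightarrow> connected_on E S \<Longrightarrow>
    \<forall>u\<in>subtrees T. is_centroid E w \<alpha> (vset u) (root u) \<Longrightarrow> \<forall>x\<in>S. 0 \<le> w x \<Longrightarrow>
    c * cost w T \<le> OPT S E w - \<beta> * sum w S"
proof (induction rule: search_tree.induct)
  case (1 r S ts)
  have st: "search_tree E S (Node r ts)" using 1(1-4) by (intro search_tree.intros) auto
  let ?\<H> = "components E (S - {r})"
  have IH: "c * cost w t \<le> OPT (vset t) E w - \<beta> * sum w (vset t)" if t: "t \<in> set ts" for t
    using 1(4) t connected_on_components[OF assms(1) search_tree_child_component[OF st t]]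
      1(6,7) search_tree_child_subset[OF st t] by auto
  have "c * cost w (Node r ts) = c * sum w S + (\<Sum>t\<leftarrow>ts. c * cost w t)"
    by (simp add: cost_Node[OF assms(1) st] distrib_left sum_list_const_mult)
  also have "\<dots> \<le> c * sum w S + (\<Sum>t\<leftarrow>ts. OPT (vset t) E w - \<beta> * sum w (vset t))"
    using IH by (simp add: sum_list_mono)
  also have "\<dots> = c * sum w S + (\<Sum>H\<in>?\<H>. OPT H E w) - \<beta> * (sum w S - w r)"
    using sum_list_children_eq_sum_components[OF st, of "\<lambda>H. OPT H E w - \<beta> * sum w H"]
      sum_list_children_eq_sum_components[OF st, of "sum w"] search_tree_sum_weight[OF assms(1) st, of w]
    by (simp add: sum_subtractf sum_distrib_left)
  also have "\<dots> \<le> OPT S E w - \<beta> * sum w S"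
    using OPT_split_ge_gain[OF assms(1) _ 1(5) 1(7) _ assms(2,3), of r]
      search_tree_vset[OF st] finite_vset[of "Node r ts"] 1(6)
    by (auto simp: algebra_simps)
  finally show ?case .
qed

lemma sum_weight_le_OPT:
  assumes "sym E" "finite V" "V \<noteq> {}" "\<forall>x\<in>V. 0 \<le> w x"
  shows "sum w V \<le> OPT V E w"
proof -
  obtain T where T: "search_tree E V T" "cost w T = OPT V E w"
    using OPT_attained[OF assms(2,3)] by blast
  obtain s ss where Ts: "T = Node s ss" by (cases T)
  note st = T(1)[unfolded Ts]
  have "0 \<le> cost w t" if "t \<in> set ss" for t
    using cost_eq_induced_cost[OF assms(1) search_tree_NodeD(4)[OF st that]]
      induced_cost_nonneg[of "vset t" w t] assms(4) search_tree_child_subset[OF st that] by auto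
  then have "0 \<le> (\<Sum>t\<leftarrow>ss. cost w t)" by (intro sum_list_nonneg) auto
  then show ?thesis using T(2) Ts cost_Node[OF assms(1) st, of w] by simp
qed

lemma is_tree_connected_on:
  assumes "is_tree V E"
  shows "connected_on E V"
  unfolding connected_on_def
proof
  fix x assume x: "x \<in> V"
  have "V \<subseteq> component E V x"
    using assms x unfolding is_tree_def component_def by blast
  then show "component E V x = V" using component_subset[of E V x] by blast
qed

lemma cent_le_of_gain_bound:
  assumes "is_tree V E" "\<forall>x\<in>V. 0 \<le> w x" "0 \<le> \<alpha>" "0 < c" "\<beta> \<le> 1" "gain_bound \<alpha> c \<beta>"
  shows "cent \<alpha> V E w \<le> 1 / c * OPT V E w - \<beta> / c * sum w V"
proof -
  have fin: "finite V" and ne: "V \<noteq> {}" and sym: "sym E"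
    using assms(1) unfolding is_tree_def by auto
  have rhs: "1 / c * OPT V E w - \<beta> / c * sum w V = (OPT V E w - \<beta> * sum w V) / c"
    by (simp add: diff_divide_distrib)
  have bound: "cost w T \<le> (OPT V E w - \<beta> * sum w V) / c" if "centroid_tree V E w \<alpha> T" for T
    using cost_centroid_tree_le[OF sym assms(3,6), of V T w] that is_tree_connected_on[OF assms(1)]
      assms(2,4) unfolding centroid_tree_def by (simp add: pos_le_divide_eq mult.commute)
  show ?thesis
  proof (cases "\<exists>T. centroid_tree V E w \<alpha> T")
    case True
    have "{cost w T | T. centroid_tree V E w \<alpha> T} \<subseteq> cost w ` {T. search_tree E V T}"
      unfolding centroid_tree_def by blast
    then have "finite {cost w T | T. centroid_tree V E w \<alpha> T}"
      using finite_search_trees[OF fin] finite_subset by blast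
    with True show ?thesis
      unfolding cent_def rhs using bound by (auto intro!: Max.boundedI)
  next
    case False
    have "\<beta> * sum w V \<le> sum w V"
      using assms(2,5) sum_nonneg[of V w] by (cases "\<beta> \<le> 0") (auto intro: mult_left_le_one_le order_trans[OF mult_nonpos_nonneg])
    then have "0 \<le> (OPT V E w - \<beta> * sum w V) / c"
      using sum_weight_le_OPT[OF sym fin ne assms(2)] assms(4) by simp
    moreover have "cent \<alpha> V E w = 0" unfolding cent_def using False by (simp only: if_False)
    ultimately show ?thesis unfolding rhs by simp
  qed
qed

lemma gain_bound_centroid:
  assumes "0 < \<alpha>" "\<alpha> < 1"
  shows "gain_bound \<alpha> (1 - \<alpha>) \<alpha>"
  unfolding gain_bound_def
proof (intro allI impI)
  fix m x a b Y :: real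
  assume h: "0 \<le> x" "x \<le> m" "0 \<le> a" "a \<le> \<alpha> * m" "0 \<le> b" "b \<le> \<alpha> * m"
    "m \<le> Y \<or> (m - a + x \<le> Y \<and> (2 * (m - a) \<le> Y \<or> 2 * (m - a) - b + x \<le> Y))"
  have "\<alpha> * x \<le> \<alpha> * m" "\<alpha> * x \<le> x"
    using h(1,2) assms by (auto intro: mult_left_mono mult_left_le_one_le)
  then show "(1 - \<alpha>) * m + \<alpha> * x \<le> Y"
    using h by (auto simp: algebra_simps)
qed

lemma gain_bound_centroid_third:
  assumes "1/3 \<le> \<alpha>" "\<alpha> \<le> 1/2"
  shows "gain_bound \<alpha> (2 - 3 * \<alpha>) (3 * \<alpha> - 1)"
  unfolding gain_bound_def
proof (intro allI impI)
  fix m x a b Y :: real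
  assume h: "0 \<le> x" "x \<le> m" "0 \<le> a" "a \<le> \<alpha> * m" "0 \<le> b" "b \<le> \<alpha> * m"
    "m \<le> Y \<or> (m - a + x \<le> Y \<and> (2 * (m - a) \<le> Y \<or> 2 * (m - a) - b + x \<le> Y))"
  have "(3 * \<alpha> - 1) * x \<le> (3 * \<alpha> - 1) * m" "0 \<le> (1 - 2 * \<alpha>) * m" "0 \<le> (2 - 3 * \<alpha>) * x"
    using h(1,2) assms by (auto intro: mult_left_mono mult_nonneg_nonneg)
  then show "(2 - 3 * \<alpha>) * m + (3 * \<alpha> - 1) * x \<le> Y"
    using h by (auto simp: algebra_simps)
qed

theorem theorem7:
  fixes V :: "'a set" and E :: "('a \<times> 'a) set" and w :: "'a \<Rightarrow> real"
  assumes "is_tree V E"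
    and "\<forall>x\<in>V. w x \<ge> 0"
  shows "(\<forall>\<alpha>::real. 0 < \<alpha> \<and> \<alpha> < 1 \<longrightarrow>
           cent \<alpha> V E w \<le> 1 / (1 - \<alpha>) * OPT V E w - \<alpha> / (1 - \<alpha>) * sum w V)
       \<and> (\<forall>\<alpha>::real. 1/3 \<le> \<alpha> \<and> \<alpha> \<le> 1/2 \<longrightarrow>
           cent \<alpha> V E w \<le> 1 / (2 - 3 * \<alpha>) * OPT V E w - (3 * \<alpha> - 1) / (2 - 3 * \<alpha>) * sum w V)"
  using cent_le_of_gain_bound[OF assms] gain_bound_centroid gain_bound_centroid_third by auto

end
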